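(* Let $A=(i_1,\dots,i_a)$ be an ordered tuple of distinct elements of $I_d$, $\alpha\in\mathbb{Z}_2^{a,\mathrm{ev}}$, $j\in I_a$, and $r\ge0$. Then in $R_l[x_1,\dots,x_d]=R[x_1,\dots,x_d]/(x_1^l,\dots,x_d^l)$, $$x_{i_j}\,h^\alpha_r(A)=(-1)^{\alpha_j}\,h^\alpha_r(A)\,x_{\sigma_A(i_j)}.$$
   Context: $l,d\ge1$, $R$ a commutative ring, $I_a=\{1,\dots,a\}$. For an ordered tuple $A=(i_1,\dots,i_a)$ of distinct elements of $I_d$, $\sigma_A$ is the cyclic permutation $i_1\mapsto i_2\mapsto\dots\mapsto i_a\mapsto i_1$. For $\alpha\in\mathbb{Z}_2^a$, $|\alpha|=\sum_j\alpha_j$, $\mathbb{Z}_2^{a,\mathrm{ev}}$ is the set of $\alpha$ with $|\alpha|$ even, and $\epsilon^\alpha_j=\prod_{k<j}(-1)^{\alpha_k}$ (so $\epsilon^\alpha_1=1$). For $r\ge0$ and $\alpha\in\mathbb{Z}_2^{a,\mathrm{ev}}$, $h^\alpha_r(A)=\sum_{r_1+\dots+r_a=(a-1)(l-1)+r,\ r_j\ge0}\prod_{j=1}^a(\epsilon^\alpha_jx_{i_j})^{r_j}\in R_l[x_1,\dots,x_d]$. *)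

theory Defs
  imports Main "HOL-Library.Poly_Mapping"
begin

type_synonym 'a mpoly = "(nat \<Rightarrow>\<^sub>0 nat) \<Rightarrow>\<^sub>0 'a"

definition Var :: "nat \<Rightarrow> 'a::comm_ring_1 mpoly" where
  "Var k = Poly_Mapping.single (Poly_Mapping.single k 1) 1"

text \<open>Equality in R_l[x_1..x_d] = R[x_1..x_d]/(x_1^l,...,x_d^l):
  the difference lies in the ideal generated by x_1^l, ..., x_d^l.\<close>
definition eq_trunc :: "nat \<Rightarrow> nat \<Rightarrow> 'a::comm_ring_1 mpoly \<Rightarrow> 'a mpoly \<Rightarrow> bool" where
  "eq_trunc l d p q \<longleftrightarrow> (\<exists>g. p - q = (\<Sum>k\<in>{1..d}. g k * Var k ^ l))"

text \<open>Sign epsilon^alpha_j, with 0-based index j (j = 0 is the paper's j = 1).\<close>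
definition eps :: "nat list \<Rightarrow> nat \<Rightarrow> int" where
  "eps \<alpha> j = (\<Prod>k<j. (-1) ^ (\<alpha> ! k))"

text \<open>h^alpha_r(A), as a polynomial (its class in R_l[x] is meant).\<close>
definition hpoly :: "nat \<Rightarrow> nat list \<Rightarrow> nat list \<Rightarrow> nat \<Rightarrow> 'a::comm_ring_1 mpoly" where
  "hpoly l \<alpha> A r =
     (\<Sum>rs\<in>{rs. length rs = length A \<and> sum_list rs = (length A - 1) * (l - 1) + r}.
        \<Prod>j<length A. (of_int (eps \<alpha> j) * Var (A ! j)) ^ (rs ! j))"

definition sigmaA :: "nat list \<Rightarrow> nat \<Rightarrow> nat" where
  "sigmaA A i = (if i \<in> set A then A ! (((THE j. j < length A \<and> A ! j = i) + 1) mod length A) else i)"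

end

theory Submission
  imports Defs
begin

text \<open>Put \<open>y\<^sub>t = \<epsilon>\<^sub>t x\<^bsub>i\<^sub>t\<^esub>\<close>. Then \<open>h\<close> is the complete homogeneous polynomial of degree
  \<open>N = (a-1)(l-1)+r\<close> in \<open>y\<^sub>1, \<dots>, y\<^sub>a\<close>, and \<open>y\<^sub>j h\<close> is the sum of all monomials of degree \<open>N+1\<close>
  with positive \<open>y\<^sub>j\<close>-exponent. So \<open>y\<^sub>j h - y\<^sub>k h\<close> only involves monomials with a vanishing
  exponent, and by pigeonhole each of them has another exponent \<open>\<ge> l\<close>: it lies in the ideal
  \<open>(x\<^sub>1\<^sup>l, \<dots>, x\<^sub>d\<^sup>l)\<close>. Taking \<open>k = j+1 mod a\<close>, the sign relation \<open>\<epsilon>\<^sub>j \<epsilon>\<^sub>k = (-1)\<^bsup>\<alpha>\<^sub>j\<^esup>\<close>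
  (for \<open>j = a\<close> this is where \<open>|\<alpha>|\<close> even is used) turns \<open>y\<^sub>j h \<equiv> y\<^sub>k h\<close> into the claim.\<close>

definition trunc_ideal :: "nat \<Rightarrow> nat \<Rightarrow> 'a::comm_ring_1 mpoly set" where
  "trunc_ideal l d = {p. \<exists>g. p = (\<Sum>k\<in>{1..d}. g k * Var k ^ l)}"

lemma eq_trunc_iff_diff_in_trunc_ideal: "eq_trunc l d p q \<longleftrightarrow> p - q \<in> trunc_ideal l d"
  unfolding eq_trunc_def trunc_ideal_def by simp

lemma trunc_ideal_I: "p = (\<Sum>k\<in>{1..d}. g k * Var k ^ l) \<Longrightarrow> p \<in> trunc_ideal l d"
  unfolding trunc_ideal_def by blast

lemma trunc_ideal_zero: "0 \<in> trunc_ideal l d"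
  by (rule trunc_ideal_I[where g = "\<lambda>_. 0"]) simp

lemma trunc_ideal_add:
  assumes "p \<in> trunc_ideal l d" "q \<in> trunc_ideal l d"
  shows "p + q \<in> trunc_ideal l d"
proof -
  from assms obtain g h where "p = (\<Sum>k\<in>{1..d}. g k * Var k ^ l)" "q = (\<Sum>k\<in>{1..d}. h k * Var k ^ l)"
    unfolding trunc_ideal_def by blast
  then have "p + q = (\<Sum>k\<in>{1..d}. (g k + h k) * Var k ^ l)"
    by (simp add: sum.distrib distrib_right)
  then show ?thesis by (rule trunc_ideal_I)
qed

lemma trunc_ideal_mult_left:
  assumes "p \<in> trunc_ideal l d"
  shows "c * p \<in> trunc_ideal l d"
proof -
  from assms obtain g where "p = (\<Sum>k\<in>{1..d}. g k * Var k ^ l)"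
    unfolding trunc_ideal_def by blast
  then have "c * p = (\<Sum>k\<in>{1..d}. (c * g k) * Var k ^ l)"
    by (simp add: sum_distrib_left mult.assoc)
  then show ?thesis by (rule trunc_ideal_I)
qed

lemma trunc_ideal_uminus: "p \<in> trunc_ideal l d \<Longrightarrow> - p \<in> trunc_ideal l d"
  using trunc_ideal_mult_left[of p l d "-1"] by simp

lemma trunc_ideal_sum:
  assumes "finite S" "\<And>x. x \<in> S \<Longrightarrow> f x \<in> trunc_ideal l d"
  shows "(\<Sum>x\<in>S. f x) \<in> trunc_ideal l d"
  using assms
proof (induction S rule: finite_induct)
  case empty
  show ?case by (simp add: trunc_ideal_zero)
next
  case (insert x S)
  then show ?case by (simp add: trunc_ideal_add)
qed

lemma Var_power_in_trunc_ideal: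
  assumes "k \<in> {1..d}" "l \<le> n"
  shows "c * Var k ^ n \<in> trunc_ideal l d"
proof (rule trunc_ideal_I)
  have "(\<Sum>i\<in>{1..d}. (if i = k then c * Var k ^ (n - l) else 0) * Var i ^ l)
      = (\<Sum>i\<in>{1..d}. if i = k then c * Var k ^ (n - l) * Var k ^ l else 0)"
    by (intro sum.cong) auto
  also have "\<dots> = c * Var k ^ n"
    using assms by (simp add: mult.assoc power_add[symmetric])
  finally show "c * Var k ^ n = (\<Sum>i\<in>{1..d}. (if i = k then c * Var k ^ (n - l) else 0) * Var i ^ l)"
    by simp
qed

definition weak_compositions :: "nat \<Rightarrow> nat \<Rightarrow> nat list set" where
  "weak_compositions a n = {m. length m = a \<and> sum_list m = n}"

lemma finite_weak_compositions: "finite (weak_compositions a n)"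
proof (rule finite_subset)
  show "weak_compositions a n \<subseteq> {m. set m \<subseteq> {0..n} \<and> length m = a}"
    unfolding weak_compositions_def using member_le_sum_list by fastforce
  show "finite {m. set m \<subseteq> {0..n} \<and> length m = a}"
    by (rule finite_lists_length_eq) simp
qed

definition complete_hom :: "nat \<Rightarrow> nat \<Rightarrow> (nat \<Rightarrow> 'a::comm_semiring_1) \<Rightarrow> 'a" where
  "complete_hom a n y = (\<Sum>m\<in>weak_compositions a n. \<Prod>t<a. y t ^ (m ! t))"

lemma hpoly_eq_complete_hom:
  "hpoly l \<alpha> A r = complete_hom (length A) ((length A - 1) * (l - 1) + r)
                      (\<lambda>t. of_int (eps \<alpha> t) * Var (A ! t))"
  unfolding hpoly_def complete_hom_def weak_compositions_def ..

lemma monomial_increment: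
  fixes y :: "nat \<Rightarrow> 'a::comm_semiring_1"
  assumes "j < length m"
  shows "y j * (\<Prod>t<length m. y t ^ (m ! t)) = (\<Prod>t<length m. y t ^ (m[j := Suc (m ! j)] ! t))"
proof -
  have "(\<Prod>t<length m. y t ^ (m[j := Suc (m ! j)] ! t))
      = (\<Prod>t<length m. y t ^ (m ! t) * (if t = j then y t else 1))"
    using assms by (intro prod.cong) (auto simp: nth_list_update mult.commute)
  also have "\<dots> = y j * (\<Prod>t<length m. y t ^ (m ! t))"
    using assms by (simp add: prod.distrib prod.delta ac_simps)
  finally show ?thesis ..
qed

lemma complete_hom_mult:
  fixes y :: "nat \<Rightarrow> 'a::comm_semiring_1"
  assumes "j < a"
  shows "y j * complete_hom a n y
           = (\<Sum>m\<in>{m \<in> weak_compositions a (Suc n). 0 < m ! j}. \<Prod>t<a. y t ^ (m ! t))"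
  unfolding complete_hom_def sum_distrib_left
proof (rule sum.reindex_bij_witness[where i = "\<lambda>m. m[j := m ! j - 1]" and j = "\<lambda>m. m[j := Suc (m ! j)]"])
  fix m assume m: "m \<in> weak_compositions a n"
  then show "(m[j := Suc (m ! j)])[j := (m[j := Suc (m ! j)]) ! j - 1] = m"
    using assms unfolding weak_compositions_def by simp
  show "m[j := Suc (m ! j)] \<in> {m \<in> weak_compositions a (Suc n). 0 < m ! j}"
    using m assms unfolding weak_compositions_def by (auto simp: sum_list_update)
  show "(\<Prod>t<a. y t ^ (m[j := Suc (m ! j)] ! t)) = y j * (\<Prod>t<a. y t ^ (m ! t))"
    using m assms monomial_increment[of j m y] unfolding weak_compositions_def by simp
next
  fix m assume m: "m \<in> {m \<in> weak_compositions a (Suc n). 0 < m ! j}"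
  then show "(m[j := m ! j - 1])[j := Suc ((m[j := m ! j - 1]) ! j)] = m"
    using assms unfolding weak_compositions_def by auto
  have "m ! j \<le> sum_list m"
    using m assms elem_le_sum_list[of j m] unfolding weak_compositions_def by auto
  then show "m[j := m ! j - 1] \<in> weak_compositions a n"
    using m assms unfolding weak_compositions_def by (auto simp: sum_list_update)
qed

lemma composition_with_zero_part_has_large_part:
  assumes "length m = a" "(a - 1) * (l - 1) < sum_list m" "k < a" "m ! k = 0"
  shows "\<exists>t<a. l \<le> m ! t"
proof (rule ccontr)
  assume "\<not> ?thesis"
  then have small: "\<And>t. t < a \<Longrightarrow> m ! t \<le> l - 1" by force
  have "sum_list m = (\<Sum>t\<in>{0..<a} - {k}. m ! t)"
    using assms(1,3,4) by (simp add: sum_list_sum_nth sum.remove)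
  also have "\<dots> \<le> card ({0..<a} - {k}) * (l - 1)"
    using small sum_bounded_above[of "{0..<a} - {k}" "(!) m" "l - 1"] by simp
  also have "\<dots> = (a - 1) * (l - 1)" using assms(3) by simp
  finally show False using assms(2) by linarith
qed

lemma monomial_in_trunc_ideal:
  fixes c :: "nat \<Rightarrow> 'a::comm_ring_1 mpoly"
  assumes "length A = a" "set A \<subseteq> {1..d}" "t < a" "l \<le> m ! t"
  shows "(\<Prod>s<a. (c s * Var (A ! s)) ^ (m ! s)) \<in> trunc_ideal l d"
proof -
  define rest where "rest = (\<Prod>s\<in>{..<a} - {t}. (c s * Var (A ! s)) ^ (m ! s))"
  have "(\<Prod>s<a. (c s * Var (A ! s)) ^ (m ! s)) = (c t * Var (A ! t)) ^ (m ! t) * rest"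
    unfolding rest_def using assms(3) by (intro prod.remove) auto
  also have "\<dots> = (rest * c t ^ (m ! t)) * Var (A ! t) ^ (m ! t)"
    by (simp only: power_mult_distrib ac_simps)
  also have "\<dots> \<in> trunc_ideal l d"
    using assms nth_mem by (intro Var_power_in_trunc_ideal) blast+
  finally show ?thesis .
qed

lemma complete_hom_mult_var_diff_in_trunc_ideal:
  fixes c :: "nat \<Rightarrow> 'a::comm_ring_1 mpoly" and A :: "nat list"
  defines "y \<equiv> \<lambda>s. c s * Var (A ! s)"
  assumes "length A = a" "set A \<subseteq> {1..d}" "j < a" "k < a"
  shows "y j * complete_hom a ((a - 1) * (l - 1) + r) y
           - y k * complete_hom a ((a - 1) * (l - 1) + r) y \<in> trunc_ideal l d"
proof -
  define N where "N = (a - 1) * (l - 1) + r"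
  define mon where "mon m = (\<Prod>t<a. y t ^ (m ! t))" for m
  have "y j * complete_hom a N y - y k * complete_hom a N y
      = (\<Sum>m\<in>weak_compositions a (Suc N).
           (if 0 < m ! j then mon m else 0) - (if 0 < m ! k then mon m else 0))"
    unfolding complete_hom_mult[OF assms(4)] complete_hom_mult[OF assms(5)] mon_def[symmetric]
    by (simp only: sum.inter_filter[OF finite_weak_compositions] sum_subtractf)
  also have "\<dots> \<in> trunc_ideal l d"
  proof (rule trunc_ideal_sum[OF finite_weak_compositions])
    fix m assume "m \<in> weak_compositions a (Suc N)"
    then have m: "length m = a" "(a - 1) * (l - 1) < sum_list m"
      unfolding weak_compositions_def N_def by auto
    have large: "mon m \<in> trunc_ideal l d" if "i < a" "m ! i = 0" for i
      using composition_with_zero_part_has_large_part[OF m that] monomial_in_trunc_ideal assms(2,3)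
      unfolding mon_def y_def by blast
    show "(if 0 < m ! j then mon m else 0) - (if 0 < m ! k then mon m else 0) \<in> trunc_ideal l d"
      using large[OF assms(4)] large[OF assms(5)] trunc_ideal_uminus[of "mon m"] trunc_ideal_zero
      by (cases "m ! j = 0"; cases "m ! k = 0") simp_all
  qed
  finally show ?thesis unfolding N_def .
qed

lemma eps_Suc: "eps \<alpha> (Suc j) = eps \<alpha> j * (-1) ^ (\<alpha> ! j)"
  unfolding eps_def by simp

lemma eps_mult_self: "eps \<alpha> j * eps \<alpha> j = 1"
  unfolding eps_def prod.distrib[symmetric] power_add[symmetric] by simp

lemma eps_length: "eps \<alpha> (length \<alpha>) = (-1) ^ sum_list \<alpha>"
  unfolding eps_def power_sum[symmetric] sum_list_sum_nth atLeast0LessThan ..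

lemma eps_mult_eps_Suc_mod_length:
  assumes "even (sum_list \<alpha>)" "j < length \<alpha>"
  shows "eps \<alpha> j * eps \<alpha> (Suc j mod length \<alpha>) = (-1) ^ (\<alpha> ! j)"
proof -
  have "eps \<alpha> (Suc j mod length \<alpha>) = eps \<alpha> j * (-1) ^ (\<alpha> ! j)"
  proof (cases "Suc j < length \<alpha>")
    case True
    then show ?thesis by (simp add: eps_Suc)
  next
    case False
    with assms(2) have "Suc j = length \<alpha>" by simp
    then show ?thesis
      using eps_length[of \<alpha>] eps_Suc[of \<alpha> j] assms(1) by (simp add: eps_def)
  qed
  then show ?thesis
    using eps_mult_self[of \<alpha> j] by (simp add: mult.assoc[symmetric])
qed

lemma sigmaA_nth:
  assumes "distinct A" "j < length A"
  shows "sigmaA A (A ! j) = A ! (Suc j mod length A)"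
proof -
  have "(THE i. i < length A \<and> A ! i = A ! j) = j"
    using assms by (auto simp: nth_eq_iff_index_eq)
  then show ?thesis unfolding sigmaA_def using assms(2) by simp
qed

theorem mainTheorem11:
  fixes l d r j :: nat and A \<alpha> :: "nat list"
  assumes "l \<ge> 1" and "d \<ge> 1"
    and "A \<noteq> []" and "distinct A" and "set A \<subseteq> {1..d}"
    and "length \<alpha> = length A" and "\<forall>x\<in>set \<alpha>. x < 2" and "even (sum_list \<alpha>)"
    and "j < length A"
  shows "eq_trunc l d
           (Var (A ! j) * (hpoly l \<alpha> A r :: 'a::comm_ring_1 mpoly))
           (of_int ((-1) ^ (\<alpha> ! j)) * hpoly l \<alpha> A r * Var (sigmaA A (A ! j)))"
proof -
  \<comment> \<open>Only the parity of the entries of \<open>\<alpha>\<close> matters.\<close>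
  define k where "k = Suc j mod length A"
  define e where "e = eps \<alpha> j"
  define s :: int where "s = (-1) ^ (\<alpha> ! j)"
  define y :: "nat \<Rightarrow> 'a mpoly" where "y t = of_int (eps \<alpha> t) * Var (A ! t)" for t
  define h where "h = (hpoly l \<alpha> A r :: 'a mpoly)"
  have "k < length A" using assms(9) unfolding k_def by (intro mod_less_divisor) auto
  have "e * e = 1" unfolding e_def by (rule eps_mult_self)
  moreover have "e * eps \<alpha> k = s"
    using eps_mult_eps_Suc_mod_length[of \<alpha> j] assms(6,8,9) unfolding k_def e_def s_def by simp
  ultimately have yj: "of_int e * y j = Var (A ! j)" and yk: "of_int e * y k = of_int s * Var (A ! k)"
    unfolding y_def e_def[symmetric] mult.assoc[symmetric] of_int_mult[symmetric] by simp_all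
  have "of_int e * (y j * h - y k * h) = (of_int e * y j) * h - (of_int e * y k) * h"
    by (simp only: right_diff_distrib mult.assoc)
  also have "\<dots> = Var (A ! j) * h - of_int s * h * Var (A ! k)"
    by (simp only: yj yk ac_simps)
  finally have diff_eq: "Var (A ! j) * h - of_int s * h * Var (A ! k) = of_int e * (y j * h - y k * h)"
    by (rule sym)
  have "y j * h - y k * h \<in> trunc_ideal l d"
    using complete_hom_mult_var_diff_in_trunc_ideal[where c = "\<lambda>t. of_int (eps \<alpha> t)",
        OF refl assms(5,9) \<open>k < length A\<close>]
    unfolding h_def hpoly_eq_complete_hom y_def .
  then have "Var (A ! j) * h - of_int s * h * Var (A ! k) \<in> trunc_ideal l d"
    unfolding diff_eq by (rule trunc_ideal_mult_left)
  then show ?thesis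
    unfolding eq_trunc_iff_diff_in_trunc_ideal sigmaA_nth[OF assms(4,9)] k_def[symmetric]
      h_def[symmetric] s_def[symmetric] .
qed

end
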